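(* Let $X$ be a Banach lattice that has a quasi-interior point, and let $P\colon X\to X$ be a positive projection satisfying $\alpha\,\mathrm{id}_X\le P$ for some $\alpha>0$. If $B\subseteq X$ is a projection band with $P(B)\subseteq B$, then its disjoint complement $B^d$ also satisfies $P(B^d)\subseteq B^d$.
   Context: A quasi-interior point of $X$ is an element $e\in X_+$ whose generated ideal is norm dense in $X$. A positive projection is a linear $P$ with $P^2=P$ and $P(X_+)\subseteq X_+$. $\alpha\,\mathrm{id}_X\le P$ means $Px\ge\alpha x$ for all $x\in X_+$. $B^d=\{x\in X: |x|\wedge|b|=0 \text{ for all } b\in B\}$. *)

theory Defs
  imports "HOL-Analysis.Analysis"
begin

definition latabs :: "'a::{lattice,uminus} \<Rightarrow> 'a" where
  "latabs x = sup x (- x)"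

class banach_lattice = banach + lattice +
  assumes add_mono_bl: "x \<le> y \<Longrightarrow> x + z \<le> y + z"
    and scale_mono_bl: "x \<le> y \<Longrightarrow> 0 \<le> c \<Longrightarrow> c *\<^sub>R x \<le> c *\<^sub>R y"
    and norm_mono_bl: "sup x (- x) \<le> sup y (- y) \<Longrightarrow> norm x \<le> norm y"

definition positive_cone :: "'a::banach_lattice set" where
  "positive_cone = {x. 0 \<le> x}"

definition principal_ideal :: "'a::banach_lattice \<Rightarrow> 'a set" where
  "principal_ideal e = {x. \<exists>c::real. 0 \<le> c \<and> latabs x \<le> c *\<^sub>R e}"

definition quasi_interior_point :: "'a::banach_lattice \<Rightarrow> bool" where
  "quasi_interior_point e \<longleftrightarrow> 0 \<le> e \<and> closure (principal_ideal e) = UNIV"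

definition positive_projection :: "('a::banach_lattice \<Rightarrow> 'a) \<Rightarrow> bool" where
  "positive_projection P \<longleftrightarrow> linear P \<and> P \<circ> P = P \<and> (\<forall>x. 0 \<le> x \<longrightarrow> 0 \<le> P x)"

definition disj_compl :: "'a::banach_lattice set \<Rightarrow> 'a set" where
  "disj_compl B = {x. \<forall>b\<in>B. inf (latabs x) (latabs b) = 0}"

definition is_sup_of :: "'a::banach_lattice set \<Rightarrow> 'a \<Rightarrow> bool" where
  "is_sup_of D s \<longleftrightarrow> (\<forall>d\<in>D. d \<le> s) \<and> (\<forall>u. (\<forall>d\<in>D. d \<le> u) \<longrightarrow> s \<le> u)"

definition lattice_ideal :: "'a::banach_lattice set \<Rightarrow> bool" where
  "lattice_ideal B \<longleftrightarrow> subspace B \<and> (\<forall>x y. y \<in> B \<longrightarrow> latabs x \<le> latabs y \<longrightarrow> x \<in> B)"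

definition band :: "'a::banach_lattice set \<Rightarrow> bool" where
  "band B \<longleftrightarrow> lattice_ideal B \<and> (\<forall>D s. D \<subseteq> B \<longrightarrow> is_sup_of D s \<longrightarrow> s \<in> B)"

definition projection_band :: "'a::banach_lattice set \<Rightarrow> bool" where
  "projection_band B \<longleftrightarrow> band B \<and> (\<forall>x. \<exists>b\<in>B. \<exists>c\<in>disj_compl B. x = b + c)"

end

theory Submission
  imports Defs "HOL-Library.Lattice_Algebras"
begin

text \<open>Write \<open>Q\<close> for the band projection onto \<open>B\<close>, so that \<open>P B \<subseteq> B\<close> reads \<open>Q P Q = P Q\<close>,
  and let \<open>x \<ge> 0\<close> with \<open>Q x = 0\<close>. Set \<open>b = Q P x\<close> and \<open>c = P x - b\<close>. Since \<open>I - Q\<close> is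
  positive, \<open>P x \<ge> \<alpha> x\<close> gives \<open>c \<ge> \<alpha> x \<ge> 0\<close>. Idempotence of \<open>P\<close> and \<open>Q P Q = P Q\<close> give
  \<open>Q P c = b - P b\<close> and \<open>P (Q P c) = 0\<close>, so \<open>Q P c \<ge> 0\<close> together with \<open>\<alpha> Q P c \<le> P Q P c = 0\<close>
  forces \<open>Q P c = 0\<close>. Then \<open>0 \<le> Q P (c - \<alpha> x) = - \<alpha> b\<close>, whence \<open>b = 0\<close>, i.e.
  \<open>P x \<in> B\<^sup>d\<close>. Arbitrary \<open>x \<in> B\<^sup>d\<close> are handled through their positive and negative parts.\<close>

context banach_lattice
begin

subclass lattice_ab_group_add
  by standard (simp add: add_mono_bl add.commute)

end

lemma scaleR_right_mono_bl:
  fixes x :: "'a::banach_lattice"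
  assumes "a \<le> b" "0 \<le> x"
  shows "a *\<^sub>R x \<le> b *\<^sub>R x"
proof -
  have "(b - a) *\<^sub>R 0 \<le> (b - a) *\<^sub>R x"
    using assms by (intro scale_mono_bl) auto
  then have "0 \<le> b *\<^sub>R x - a *\<^sub>R x"
    by (simp add: scaleR_diff_left)
  then show ?thesis
    by simp
qed

instance banach_lattice \<subseteq> ordered_real_vector
  by standard (simp_all add: scale_mono_bl scaleR_right_mono_bl)

lemma latabs_nonneg: "0 \<le> latabs (x::'a::lattice_ab_group_add)"
proof -
  have "x + - x \<le> latabs x + latabs x"
    unfolding latabs_def by (intro add_mono) auto
  then show ?thesis
    by simp
qed

lemma latabs_eq_0_iff: "latabs (x::'a::lattice_ab_group_add) = 0 \<longleftrightarrow> x = 0"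
  unfolding latabs_def by simp

lemma latabs_of_nonneg: "0 \<le> (x::'a::lattice_ab_group_add) \<Longrightarrow> latabs x = x"
  unfolding latabs_def by (metis minus_le_self_iff sup.absorb1)

lemma latabs_add_le: "latabs ((x::'a::lattice_ab_group_add) + y) \<le> latabs x + latabs y"
  unfolding latabs_def minus_add_distrib by (intro sup_least add_mono) auto

lemma latabs_uminus: "latabs (- (x::'a::lattice_ab_group_add)) = latabs x"
  unfolding latabs_def by (simp add: sup_commute)

lemma latabs_pprt_le: "latabs (pprt (x::'a::lattice_ab_group_add)) \<le> latabs x"
  using latabs_nonneg[of x]
  by (simp add: latabs_of_nonneg pprt_def) (simp add: latabs_def le_supI1)

lemma latabs_nprt_le: "latabs (nprt (x::'a::lattice_ab_group_add)) \<le> latabs x"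
  using latabs_pprt_le[of "- x"] by (simp add: pprt_neg latabs_uminus)

lemma latabs_scaleR_le:
  fixes x :: "'a::{ordered_real_vector,lattice_ab_group_add}"
  shows "latabs (a *\<^sub>R x) \<le> \<bar>a\<bar> *\<^sub>R latabs x"
proof -
  have "\<bar>a\<bar> *\<^sub>R x \<le> \<bar>a\<bar> *\<^sub>R latabs x" "\<bar>a\<bar> *\<^sub>R (- x) \<le> \<bar>a\<bar> *\<^sub>R latabs x"
    by (intro scaleR_left_mono; simp add: latabs_def)+
  then show ?thesis
    unfolding latabs_def by (cases "0 \<le> a") auto
qed

lemma inf_add_le:
  fixes u v w :: "'a::lattice_ab_group_add"
  assumes "0 \<le> u" "0 \<le> v" "0 \<le> w"
  shows "inf (u + v) w \<le> inf u w + inf v w"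
proof -
  have "inf (u + v) w \<le> inf (u + inf v w) (w + inf v w)"
    unfolding add_inf_distrib_left using assms
    by (auto intro: le_infI2 simp: add_increasing add_increasing2)
  also have "\<dots> = inf u w + inf v w"
    by (simp add: add_inf_distrib_right)
  finally show ?thesis .
qed

lemma inf_scaleR_le:
  fixes u v :: "'a::{ordered_real_vector,lattice_ab_group_add}"
  assumes "0 < k"
  shows "inf (k *\<^sub>R u) (k *\<^sub>R v) \<le> k *\<^sub>R inf u v"
proof -
  have "(1 / k) *\<^sub>R inf (k *\<^sub>R u) (k *\<^sub>R v) \<le> (1 / k) *\<^sub>R (k *\<^sub>R u)"
       "(1 / k) *\<^sub>R inf (k *\<^sub>R u) (k *\<^sub>R v) \<le> (1 / k) *\<^sub>R (k *\<^sub>R v)"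
    using assms by (intro scaleR_left_mono; simp)+
  then have "(1 / k) *\<^sub>R inf (k *\<^sub>R u) (k *\<^sub>R v) \<le> inf u v"
    using assms by simp
  then have "k *\<^sub>R ((1 / k) *\<^sub>R inf (k *\<^sub>R u) (k *\<^sub>R v)) \<le> k *\<^sub>R inf u v"
    using assms by (intro scaleR_left_mono) auto
  then show ?thesis
    using assms by simp
qed

lemma nonneg_if_disjoint_sum_nonneg:
  fixes b c :: "'a::lattice_ab_group_add"
  assumes disjoint: "inf (latabs c) (latabs b) = 0" and "0 \<le> b + c"
  shows "0 \<le> b"
proof -
  have "- b \<le> c"
    using add_right_mono[OF assms(2), of "- b"] by (simp add: algebra_simps)
  then have "pprt (- b) \<le> inf (latabs c) (latabs b)"
    using latabs_nonneg[of b] latabs_nonneg[of c]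
    by (auto simp: pprt_def latabs_def intro: le_supI1)
  then have "- b \<le> 0"
    using disjoint by (simp add: pprt_def)
  then show ?thesis
    by simp
qed

lemma in_disj_compl_iff: "x \<in> disj_compl B \<longleftrightarrow> (\<forall>b\<in>B. inf (latabs x) (latabs b) \<le> 0)"
  unfolding disj_compl_def
  by (auto intro: order.antisym simp: latabs_nonneg)

lemma disj_compl_solid:
  assumes "x \<in> disj_compl B" "latabs y \<le> latabs x"
  shows "y \<in> disj_compl B"
  using assms unfolding in_disj_compl_iff
  by (meson inf_mono order.refl order.trans)

lemma subspace_disj_compl: "subspace (disj_compl B)"
  unfolding subspace_def
proof safe
  show "0 \<in> disj_compl B"
    by (simp add: in_disj_compl_iff latabs_def)
next
  fix x y assume x: "x \<in> disj_compl B" and y: "y \<in> disj_compl B"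
  show "x + y \<in> disj_compl B"
    unfolding in_disj_compl_iff
  proof
    fix b assume "b \<in> B"
    have "inf (latabs (x + y)) (latabs b) \<le> inf (latabs x + latabs y) (latabs b)"
      by (intro inf_mono latabs_add_le order.refl)
    also have "\<dots> \<le> inf (latabs x) (latabs b) + inf (latabs y) (latabs b)"
      by (intro inf_add_le latabs_nonneg)
    also have "\<dots> \<le> 0"
      using x y \<open>b \<in> B\<close> by (simp add: in_disj_compl_iff add_nonpos_nonpos)
    finally show "inf (latabs (x + y)) (latabs b) \<le> 0" .
  qed
next
  fix a :: real and x assume x: "x \<in> disj_compl B"
  show "a *\<^sub>R x \<in> disj_compl B"
    unfolding in_disj_compl_iff
  proof
    fix b assume "b \<in> B"
    define k where "k = max 1 \<bar>a\<bar>"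
    have "0 < k" "\<bar>a\<bar> \<le> k" "1 \<le> k"
      unfolding k_def by auto
    have "latabs (a *\<^sub>R x) \<le> k *\<^sub>R latabs x"
      using latabs_scaleR_le[of a x] scaleR_right_mono[OF \<open>\<bar>a\<bar> \<le> k\<close> latabs_nonneg[of x]]
      by (rule order.trans)
    moreover have "latabs b \<le> k *\<^sub>R latabs b"
      using scaleR_right_mono[OF \<open>1 \<le> k\<close> latabs_nonneg[of b]] by simp
    ultimately have "inf (latabs (a *\<^sub>R x)) (latabs b) \<le> inf (k *\<^sub>R latabs x) (k *\<^sub>R latabs b)"
      by (rule inf_mono)
    also have "\<dots> \<le> k *\<^sub>R inf (latabs x) (latabs b)"
      using \<open>0 < k\<close> by (rule inf_scaleR_le)
    also have "\<dots> \<le> 0"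
      using x \<open>b \<in> B\<close> \<open>0 < k\<close> by (intro scaleR_nonneg_nonpos) (auto simp: in_disj_compl_iff)
    finally show "inf (latabs (a *\<^sub>R x)) (latabs b) \<le> 0" .
  qed
qed

lemma eq_0_if_in_disj_compl: "b \<in> B \<Longrightarrow> b \<in> disj_compl B \<Longrightarrow> b = 0"
  unfolding disj_compl_def by (auto simp: latabs_eq_0_iff)

definition band_proj :: "'a::banach_lattice set \<Rightarrow> 'a \<Rightarrow> 'a" where
  "band_proj B x = (THE b. b \<in> B \<and> x - b \<in> disj_compl B)"

lemma subspace_if_projection_band: "projection_band B \<Longrightarrow> subspace B"
  unfolding projection_band_def band_def lattice_ideal_def by blast

lemma band_proj_eqI:
  assumes "projection_band B" "b \<in> B" "x - b \<in> disj_compl B"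
  shows "band_proj B x = b"
  unfolding band_proj_def
proof (rule the_equality)
  fix b' assume b': "b' \<in> B \<and> x - b' \<in> disj_compl B"
  have "b' - b \<in> B"
    using b' assms subspace_if_projection_band subspace_diff by blast
  moreover have "b' - b \<in> disj_compl B"
    using subspace_diff[OF subspace_disj_compl assms(3), of "x - b'"] b' by simp
  ultimately show "b' = b"
    using eq_0_if_in_disj_compl by fastforce
qed (use assms in simp)

lemma band_proj_mem:
  assumes "projection_band B"
  shows "band_proj B x \<in> B" "x - band_proj B x \<in> disj_compl B"
proof -
  obtain b c where "b \<in> B" "c \<in> disj_compl B" "x = b + c"
    using assms unfolding projection_band_def by blast
  then have "band_proj B x = b"
    using assms by (intro band_proj_eqI) auto
  with \<open>b \<in> B\<close> \<open>c \<in> disj_compl B\<close> \<open>x = b + c\<close>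
  show "band_proj B x \<in> B" "x - band_proj B x \<in> disj_compl B"
    by auto
qed

lemma linear_band_proj:
  assumes "projection_band B"
  shows "linear (band_proj B)"
proof (rule linearI)
  note mem = band_proj_mem[OF assms]
  note B = subspace_if_projection_band[OF assms] and D = subspace_disj_compl[of B]
  fix x y :: 'a and r :: real
  have "(x + y) - (band_proj B x + band_proj B y) \<in> disj_compl B"
    by (metis add_diff_add mem(2) subspace_add[OF D])
  then show "band_proj B (x + y) = band_proj B x + band_proj B y"
    by (intro band_proj_eqI assms subspace_add[OF B] mem(1))
  have "r *\<^sub>R x - r *\<^sub>R band_proj B x \<in> disj_compl B"
    by (metis scaleR_diff_right mem(2) subspace_scale[OF D])
  then show "band_proj B (r *\<^sub>R x) = r *\<^sub>R band_proj B x"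
    by (intro band_proj_eqI assms subspace_scale[OF B] mem(1))
qed

lemma band_proj_nonneg_le:
  assumes "projection_band B" "0 \<le> x"
  shows "0 \<le> band_proj B x" "band_proj B x \<le> x"
proof -
  note mem = band_proj_mem[OF assms(1), of x]
  then have disjoint: "inf (latabs (x - band_proj B x)) (latabs (band_proj B x)) = 0"
    unfolding disj_compl_def by blast
  then show "0 \<le> band_proj B x"
    using nonneg_if_disjoint_sum_nonneg[of "x - band_proj B x" "band_proj B x"] assms(2) by simp
  have "0 \<le> x - band_proj B x"
    using nonneg_if_disjoint_sum_nonneg[of "band_proj B x" "x - band_proj B x"] disjoint assms(2)
    by (simp add: inf_commute)
  then show "band_proj B x \<le> x"
    by simp
qed

lemma band_proj_band: "projection_band B \<Longrightarrow> b \<in> B \<Longrightarrow> band_proj B b = b"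
  using subspace_0[OF subspace_disj_compl] by (intro band_proj_eqI) auto

lemma band_proj_eq_0_iff:
  assumes "projection_band B"
  shows "band_proj B x = 0 \<longleftrightarrow> x \<in> disj_compl B"
proof
  assume "band_proj B x = 0"
  then show "x \<in> disj_compl B"
    using band_proj_mem(2)[OF assms, of x] by simp
next
  assume "x \<in> disj_compl B"
  then show "band_proj B x = 0"
    using subspace_0[OF subspace_if_projection_band[OF assms]] by (intro band_proj_eqI assms) auto
qed

lemma image_disj_compl_subset_if_nonneg:
  assumes "linear P" and nonneg_case: "\<And>x. x \<in> disj_compl B \<Longrightarrow> 0 \<le> x \<Longrightarrow> P x \<in> disj_compl B"
  shows "P ` disj_compl B \<subseteq> disj_compl B"
proof (rule image_subsetI)
  fix x assume x: "x \<in> disj_compl B"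
  have "pprt x \<in> disj_compl B" "nprt x \<in> disj_compl B"
    using x latabs_pprt_le latabs_nprt_le by (blast intro: disj_compl_solid)+
  then have "P (pprt x) \<in> disj_compl B" "P (- nprt x) \<in> disj_compl B"
    by (auto intro!: nonneg_case subspace_neg[OF subspace_disj_compl])
  moreover have "P x = P (pprt x) - P (- nprt x)"
    using prts[of x] linear_add[OF assms(1)] linear_neg[OF assms(1)] by (metis diff_minus_eq_add)
  ultimately show "P x \<in> disj_compl B"
    by (simp add: subspace_diff[OF subspace_disj_compl])
qed

lemma kernel_invariant_if_dominating_projection:
  fixes P Q :: "'a::ordered_real_vector \<Rightarrow> 'a"
  assumes "linear P" "linear Q"
    and P_idem: "\<And>y. P (P y) = P y"
    and P_nonneg: "\<And>y. 0 \<le> y \<Longrightarrow> 0 \<le> P y"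
    and Q_nonneg: "\<And>y. 0 \<le> y \<Longrightarrow> 0 \<le> Q y"
    and Q_le: "\<And>y. 0 \<le> y \<Longrightarrow> Q y \<le> y"
    and "0 < \<alpha>" and P_ge: "\<And>y. 0 \<le> y \<Longrightarrow> \<alpha> *\<^sub>R y \<le> P y"
    and range_Q_invariant: "\<And>y. Q (P (Q y)) = P (Q y)"
    and "0 \<le> x" "Q x = 0"
  shows "Q (P x) = 0"
proof -
  note P = linear_diff[OF assms(1)] linear_scale[OF assms(1)]
  note Q = linear_diff[OF assms(2)] linear_scale[OF assms(2)]
  define b where "b = Q (P x)"
  define c where "c = P x - b"
  have "Q (P x - \<alpha> *\<^sub>R x) \<le> P x - \<alpha> *\<^sub>R x"
    using Q_le P_ge[OF \<open>0 \<le> x\<close>] by simp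
  then have "\<alpha> *\<^sub>R x \<le> c"
    using \<open>Q x = 0\<close> by (simp add: Q b_def c_def le_diff_eq add.commute)
  moreover have "0 \<le> \<alpha> *\<^sub>R x"
    using \<open>0 < \<alpha>\<close> \<open>0 \<le> x\<close> by (simp add: scaleR_nonneg_nonneg)
  ultimately have "0 \<le> c" "0 \<le> c - \<alpha> *\<^sub>R x"
    by simp_all
  have QPc: "Q (P c) = b - P b"
    unfolding c_def b_def using range_Q_invariant[of "P x"] by (simp add: P Q P_idem)
  have "Q (P c) = 0"
  proof (rule order.antisym)
    have "\<alpha> *\<^sub>R Q (P c) \<le> P (Q (P c))"
      using P_ge Q_nonneg P_nonneg \<open>0 \<le> c\<close> by blast
    also have "\<dots> = 0"
      by (simp add: QPc P P_idem)
    finally show "Q (P c) \<le> 0"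
      using \<open>0 < \<alpha>\<close> by (simp add: scaleR_le_0_iff)
    show "0 \<le> Q (P c)"
      using Q_nonneg P_nonneg \<open>0 \<le> c\<close> by blast
  qed
  have "0 \<le> Q (P (c - \<alpha> *\<^sub>R x))"
    using Q_nonneg P_nonneg \<open>0 \<le> c - \<alpha> *\<^sub>R x\<close> by blast
  also have "\<dots> = - (\<alpha> *\<^sub>R b)"
    using \<open>Q (P c) = 0\<close> by (simp add: P Q b_def)
  finally have "b \<le> 0"
    using \<open>0 < \<alpha>\<close> by (simp add: scaleR_le_0_iff)
  moreover have "0 \<le> b"
    unfolding b_def using Q_nonneg P_nonneg \<open>0 \<le> x\<close> by blast
  ultimately show ?thesis
    unfolding b_def by (rule order.antisym)
qed

theorem lemma2p3:
  fixes P :: "'a::banach_lattice \<Rightarrow> 'a" and B :: "'a set" and \<alpha> :: real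
  assumes "\<exists>e::'a. quasi_interior_point e"
    and "positive_projection P"
    and "\<alpha> > 0"
    and "\<forall>x. 0 \<le> x \<longrightarrow> \<alpha> *\<^sub>R x \<le> P x"
    and "projection_band B"
    and "P ` B \<subseteq> B"
  shows "P ` disj_compl B \<subseteq> disj_compl B"
proof -
  have "linear P" and P_idem: "\<And>y. P (P y) = P y" and P_nonneg: "\<And>y. 0 \<le> y \<Longrightarrow> 0 \<le> P y"
    using assms(2) unfolding positive_projection_def by (auto simp: fun_eq_iff)
  have P_ge: "\<And>y. 0 \<le> y \<Longrightarrow> \<alpha> *\<^sub>R y \<le> P y"
    using assms(4) by blast
  have invariant: "\<And>y. band_proj B (P (band_proj B y)) = P (band_proj B y)"
    using assms(5,6) band_proj_mem(1) band_proj_band by blast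
  have "band_proj B (P x) = 0" if "0 \<le> x" "band_proj B x = 0" for x
    by (rule kernel_invariant_if_dominating_projection[OF \<open>linear P\<close> linear_band_proj[OF assms(5)]
          P_idem P_nonneg band_proj_nonneg_le[OF assms(5)] assms(3) P_ge invariant that])
  then show ?thesis
    using \<open>linear P\<close> band_proj_eq_0_iff[OF assms(5)]
    by (intro image_disj_compl_subset_if_nonneg) auto
qed

end
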